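(* For $s \in \{-1,1\}$ and an integer $B \geq 3$, let $I_s(B) = \{t \in \mathbb{Z} : 1 \le t \le B,\ t^2 - 4s > 0\}$, let $N_s(B)$ be the number of distinct square-free parts of the integers $t^2 - 4s$, $t \in I_s(B)$, and let $\Delta_s(B) = \#I_s(B) - N_s(B)$. Then, as $B \to \infty$, $\Delta_{-1}(B) \sim B^{1/3}$ and $\Delta_{1}(B) \sim B^{1/2}$.
   Context: The square-free part of a nonzero integer $n$ is the unique square-free integer $M$ with $n = M r^2$, $r \ge 1$. *)

theory Defs
  imports "HOL-Computational_Algebra.Squarefree" "HOL-Library.Landau_Symbols"
begin

definition sqfree_part :: "int \<Rightarrow> int" where
  "sqfree_part n = (THE M. squarefree M \<and> (\<exists>r::int. r \<ge> 1 \<and> n = M * r ^ 2))"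

definition I_set :: "int \<Rightarrow> int \<Rightarrow> int set" where
  "I_set s B = {t::int. 1 \<le> t \<and> t \<le> B \<and> t ^ 2 - 4 * s > 0}"

definition N_count :: "int \<Rightarrow> int \<Rightarrow> nat" where
  "N_count s B = card ((\<lambda>t. sqfree_part (t ^ 2 - 4 * s)) ` I_set s B)"

definition Delta :: "int \<Rightarrow> int \<Rightarrow> int" where
  "Delta s B = int (card (I_set s B)) - int (N_count s B)"

end

theory Submission
  imports Defs "HOL-Real_Asymp.Real_Asymp"
begin

text \<open>
Call t \<in> I_s(B) repeated if some smaller t' \<in> I_s(B) has t'^2 - 4s with the same square-free
part M, so that \<Delta>_s(B) counts the repeated t. Then t^2 - M r^2 = t'^2 - M r'^2 = 4s with M \<ge> 2
(t^2 - 4s is never a square), i.e. x = (t + r \<surd>M)/2 and x' = (t' + r' \<surd>M)/2 are units of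
norm s greater than 1. Both are powers \<epsilon>^k, \<epsilon>^j (j < k) of the fundamental unit \<epsilon>, and
t = x + s/x is the value D_k(u, e) of the Dickson polynomial at the trace u of \<epsilon>, e being the
norm of \<epsilon>. As (u - 1)^k and (6/5)^k are at most t + 1, the exponents k \<ge> 3 contribute
O(B^(1/3) log B) values, and for s = -1, where k is odd, the exponents k \<ge> 5 contribute
O(B^(1/5) log B). What remains is k = 2, t = u^2 - 2, when s = 1, and k = 3, t = u^3 + 3u, when
s = -1; conversely all these t are repeated, because (u^2 - 2)^2 - 4 = (u^2 - 4) u^2 and
(u^3 + 3u)^2 + 4 = (u^2 + 4)(u^2 + 1)^2.
\<close>

section \<open>Square-free parts\<close>

lemma multiplicity_squarefree_mult_square:
  fixes M r :: int
  assumes "squarefree M" "r \<noteq> 0" "prime p"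
  shows "multiplicity p (M * r^2) mod 2 = multiplicity p M"
proof -
  have "M \<noteq> 0" using assms(1) by auto
  have p: "prime_elem p" using assms(3) by (rule prime_imp_prime_elem)
  have "multiplicity p (M * r^2) = multiplicity p M + multiplicity p (r^2)"
    using p \<open>M \<noteq> 0\<close> assms(2) by (simp add: prime_elem_multiplicity_mult_distrib)
  also have "multiplicity p (r^2) = 2 * multiplicity p r"
    using p assms(2) by (simp add: prime_elem_multiplicity_power_distrib)
  finally have "multiplicity p (M * r^2) = multiplicity p M + 2 * multiplicity p r" .
  moreover have "multiplicity p M \<le> 1"
    using assms(1,3) \<open>M \<noteq> 0\<close> squarefree_factorial_semiring'' by blast
  ultimately show ?thesis by auto
qed

lemma squarefree_eq_if_mult_squares_eq:
  fixes M M' r r' :: int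
  assumes "squarefree M" "squarefree M'" "r \<noteq> 0" "r' \<noteq> 0" "M > 0"
    and "M * r^2 = M' * r'^2"
  shows "M' = M"
proof -
  have "M' * r'^2 > 0" using assms(3,5,6) by (metis mult_pos_pos zero_less_power2)
  then have "M' > 0" by (simp add: zero_less_mult_iff)
  have "normalize M' = normalize M"
  proof (rule multiplicity_eq_imp_eq)
    fix p :: int assume "prime p"
    then show "multiplicity p M' = multiplicity p M"
      using multiplicity_squarefree_mult_square[of M r p]
        multiplicity_squarefree_mult_square[of M' r' p] assms by metis
  qed (use \<open>M' > 0\<close> assms(5) in auto)
  then show ?thesis using \<open>M' > 0\<close> assms(5) by simp
qed

lemma sqfree_part_ex1:
  fixes n :: int
  assumes "n > 0"
  shows "\<exists>!M. squarefree M \<and> (\<exists>r::int. r \<ge> 1 \<and> n = M * r^2)"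
proof (rule ex1I)
  have "square_part n \<ge> 0"
    using normalize_square_part[of n] by (metis abs_ge_zero normalize_int_def)
  moreover have "square_part n \<noteq> 0" using assms by simp
  ultimately have "square_part n \<ge> 1" by linarith
  then show "squarefree (squarefree_part n) \<and> (\<exists>r::int. r \<ge> 1 \<and> n = squarefree_part n * r^2)"
    using squarefree_decompose[of n] by blast
next
  fix M assume "squarefree M \<and> (\<exists>r::int. r \<ge> 1 \<and> n = M * r^2)"
  then obtain r where M: "squarefree M" "r \<ge> 1" "n = M * r^2" by auto
  have "M > 0" using M(2,3) assms by (simp add: zero_less_mult_iff)
  moreover have "M * r^2 = squarefree_part n * square_part n ^ 2"
    using M(3) squarefree_decompose[of n] by argo
  ultimately show "M = squarefree_part n"
    using squarefree_eq_if_mult_squares_eq[of M "squarefree_part n" r "square_part n"] M(1,2) assms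
    by auto
qed

lemma sqfree_part:
  fixes n :: int
  assumes "n > 0"
  shows "squarefree (sqfree_part n)" "\<exists>r \<ge> 1. n = sqfree_part n * r^2"
  using theI'[OF sqfree_part_ex1[OF assms]] unfolding sqfree_part_def by auto

lemma sqfree_part_eqI:
  fixes n M r :: int
  assumes "n > 0" "squarefree M" "r \<ge> 1" "n = M * r^2"
  shows "sqfree_part n = M"
  unfolding sqfree_part_def
  by (rule the1_equality[OF sqfree_part_ex1[OF assms(1)]]) (use assms in auto)

lemma sqfree_part_mult_square:
  fixes n u :: int
  assumes "n > 0" "u \<noteq> 0"
  shows "sqfree_part (n * u^2) = sqfree_part n"
proof -
  obtain r where r: "r \<ge> 1" "n = sqfree_part n * r^2"
    using sqfree_part(2)[OF assms(1)] by blast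
  have "n * u^2 = sqfree_part n * (r * \<bar>u\<bar>)^2"
    using r(2) by (simp add: power_mult_distrib)
  moreover have "r * \<bar>u\<bar> \<ge> 1"
  proof -
    have "\<bar>u\<bar> \<ge> 1" using assms(2) by linarith
    then show ?thesis using r(1) mult_mono[of 1 r 1 "\<bar>u\<bar>"] by simp
  qed
  moreover have "n * u^2 > 0" using assms by simp
  ultimately show ?thesis
    using sqfree_part_eqI[of "n * u^2" "sqfree_part n" "r * \<bar>u\<bar>"] sqfree_part(1) assms(1)
    by simp
qed

section \<open>Repeated square-free parts\<close>

lemma card_eq_card_image_plus_card_repeated:
  fixes I :: "'a::linorder set" and f :: "'a \<Rightarrow> 'b"
  assumes "finite I"
  shows "card I = card (f ` I) + card {t \<in> I. \<exists>t'\<in>I. t' < t \<and> f t' = f t}"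
proof -
  define R where "R = {t \<in> I. \<exists>t'\<in>I. t' < t \<and> f t' = f t}"
  have "inj_on f (I - R)"
    by (rule inj_onI) (auto simp: R_def dest: neqE)
  moreover have "f ` I \<subseteq> f ` (I - R)"
  proof
    fix y assume "y \<in> f ` I"
    define m where "m = Min {t \<in> I. f t = y}"
    have "m \<in> I" "f m = y" "\<forall>t\<in>I. f t = y \<longrightarrow> m \<le> t"
      using Min_in[of "{t \<in> I. f t = y}"] assms \<open>y \<in> f ` I\<close> unfolding m_def by auto
    then have "m \<in> I - R" by (auto simp: R_def not_less[symmetric])
    then show "y \<in> f ` (I - R)" using \<open>f m = y\<close> by blast
  qed
  then have "f ` (I - R) = f ` I" by auto
  ultimately have "card (f ` I) = card (I - R)" by (metis card_image)
  moreover have "R \<subseteq> I" by (auto simp: R_def)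
  then have "card (I - R) + card R = card I"
    using card_Diff_subset[of R I] card_mono[OF assms] finite_subset[OF _ assms] by simp
  ultimately show ?thesis unfolding R_def by simp
qed

definition repeated :: "int \<Rightarrow> int \<Rightarrow> int set" where
  "repeated s B = {t \<in> I_set s B. \<exists>t'\<in>I_set s B. t' < t \<and>
                     sqfree_part (t'^2 - 4 * s) = sqfree_part (t^2 - 4 * s)}"

lemma finite_I_set: "finite (I_set s B)"
  by (rule finite_subset[of _ "{1..B}"]) (auto simp: I_set_def)

lemma Delta_eq_card_repeated: "Delta s B = int (card (repeated s B))"
  using card_eq_card_image_plus_card_repeated[OF finite_I_set,
      of s B "\<lambda>t. sqfree_part (t^2 - 4 * s)"]
  unfolding Delta_def N_count_def repeated_def by simp

lemma repeatedI:
  assumes "t' \<in> I_set s B" "t \<in> I_set s B" "t' < t"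
    and "t^2 - 4 * s = (t'^2 - 4 * s) * v^2" "v \<noteq> 0"
  shows "t \<in> repeated s B"
proof -
  have "sqfree_part (t^2 - 4 * s) = sqfree_part (t'^2 - 4 * s)"
    using sqfree_part_mult_square[of "t'^2 - 4 * s" v] assms by (simp add: I_set_def)
  then show ?thesis using assms(1-3) unfolding repeated_def by auto
qed

section \<open>Units of real quadratic orders\<close>

text \<open>For e = \<plusminus>1 these are the units of norm e of the order \<int>[(M + \<surd>M)/2], embedded in \<real>;
  the norm equation forces a \<equiv> M b (mod 2).\<close>

definition norm_units :: "int \<Rightarrow> int \<Rightarrow> real set" where
  "norm_units M e = {(a + b * sqrt M) / 2 | a b :: int. a^2 - M * b^2 = 4 * e}"

definition quad_units :: "int \<Rightarrow> real set" where
  "quad_units M = norm_units M 1 \<union> norm_units M (-1)"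

lemma norm_units_conj_mult:
  fixes a b M e :: int
  assumes "M \<ge> 0" "a^2 - M * b^2 = 4 * e"
  shows "(a + b * sqrt M) / 2 * ((a - b * sqrt M) / 2) = e"
proof -
  have "(a + b * sqrt M) / 2 * ((a - b * sqrt M) / 2) = (a^2 - b^2 * (sqrt M)^2) / 4"
    by (simp add: field_simps power2_eq_square)
  also have "\<dots> = e"
    using assms(1) arg_cong[OF assms(2), of real_of_int] by (simp add: algebra_simps)
  finally show ?thesis .
qed

lemma norm_units_conj:
  fixes a b M e :: int
  assumes "M \<ge> 0" "a^2 - M * b^2 = 4 * e" "e \<noteq> 0"
  shows "e / ((a + b * sqrt M) / 2) = (a - b * sqrt M) / 2"
proof -
  note prod = norm_units_conj_mult[OF assms(1,2)]
  then have "(a + b * sqrt M) / 2 \<noteq> 0" using assms(3) by auto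
  with prod show ?thesis by (metis nonzero_mult_div_cancel_left)
qed

lemma norm_units_trace:
  assumes "M \<ge> 0" "e \<noteq> 0" "x \<in> norm_units M e"
  shows "\<exists>a::int. x + e / x = a"
proof -
  obtain a b :: int where x: "x = (a + b * sqrt M) / 2" "a^2 - M * b^2 = 4 * e"
    using assms(3) by (auto simp: norm_units_def)
  have "e / x = (a - b * sqrt M) / 2"
    unfolding x(1) by (rule norm_units_conj[OF assms(1) x(2) assms(2)])
  then have "x + e / x = a" using x(1) by argo
  then show "\<exists>a::int. x + e / x = a" ..
qed

lemma even_diff_of_norm:
  fixes a b M e :: int
  assumes "a^2 - M * b^2 = 4 * e"
  shows "even (a - M * b)"
  using assms by (metis even_add even_diff even_mult_iff even_numeral power2_eq_square)

lemma norm_units_mult: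
  assumes "M \<ge> 0" "x \<in> norm_units M e" "y \<in> norm_units M f"
  shows "x * y \<in> norm_units M (e * f)"
proof -
  obtain a b :: int where x: "x = (a + b * sqrt M) / 2" "a^2 - M * b^2 = 4 * e"
    using assms(2) by (auto simp: norm_units_def)
  obtain c d :: int where y: "y = (c + d * sqrt M) / 2" "c^2 - M * d^2 = 4 * f"
    using assms(3) by (auto simp: norm_units_def)
  obtain p q where pq: "a = M * b + 2 * p" "c = M * d + 2 * q"
    using even_diff_of_norm[OF x(2)] even_diff_of_norm[OF y(2)]
    by (metis add.commute diff_add_cancel evenE)
  define A where "A = (a * c + M * b * d) div 2"
  define C where "C = (a * d + b * c) div 2"
  have "even (a * c + M * b * d)" "even (a * d + b * c)"
    unfolding pq by (simp_all add: algebra_simps)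
  then have AC: "a * c + M * b * d = 2 * A" "a * d + b * c = 2 * C"
    unfolding A_def C_def by simp_all
  have "(a * c + M * b * d)^2 - M * (a * d + b * c)^2 = (a^2 - M * b^2) * (c^2 - M * d^2)"
    by (simp add: power2_eq_square algebra_simps)
  then have "A^2 - M * C^2 = 4 * (e * f)"
    unfolding AC x(2) y(2) by (simp add: power2_eq_square algebra_simps)
  moreover have "x * y = (A + C * sqrt M) / 2"
  proof -
    have "x * y = ((a * c + M * b * d) + (a * d + b * c) * sqrt M) / 4"
      unfolding x(1) y(1) using assms(1) by (simp add: field_simps power2_eq_square)
    also have "\<dots> = (A + C * sqrt M) / 2"
      using arg_cong[OF AC(1), of real_of_int] arg_cong[OF AC(2), of real_of_int] by simp
    finally show ?thesis .
  qed
  ultimately show ?thesis unfolding norm_units_def by blast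
qed

lemma one_in_norm_units: "1 \<in> norm_units M 1"
  unfolding norm_units_def by (rule CollectI, rule exI[of _ 2], rule exI[of _ 0]) simp

lemma norm_units_power:
  assumes "M \<ge> 0" "x \<in> norm_units M e"
  shows "x ^ k \<in> norm_units M (e ^ k)"
  by (induction k) (simp_all add: one_in_norm_units norm_units_mult[OF assms(1,2)])

lemma inverse_in_norm_units:
  assumes "M \<ge> 0" "e \<in> {1, -1}" "x \<in> norm_units M e"
  shows "inverse x \<in> norm_units M e"
proof -
  obtain a b :: int where x: "x = (a + b * sqrt M) / 2" "a^2 - M * b^2 = 4 * e"
    using assms(3) by (auto simp: norm_units_def)
  have "e * e = 1" using assms(2) by auto
  have "inverse x = e * (e / x)"
    using \<open>e * e = 1\<close> by (simp add: field_simps flip: of_int_mult)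
  also have "\<dots> = e * ((a - b * sqrt M) / 2)"
    unfolding x(1) using norm_units_conj[OF assms(1) x(2)] assms(2) by auto
  also have "\<dots> = (e * a + (- e * b) * sqrt M) / 2"
    by (simp add: algebra_simps)
  finally have "inverse x = (e * a + (- e * b) * sqrt M) / 2" .
  moreover have "(e * a)^2 - M * (- e * b)^2 = 4 * e"
    using x(2) \<open>e * e = 1\<close> by (simp add: power2_eq_square algebra_simps)
  ultimately show ?thesis unfolding norm_units_def by blast
qed

lemma quad_units_mult:
  "M \<ge> 0 \<Longrightarrow> x \<in> quad_units M \<Longrightarrow> y \<in> quad_units M \<Longrightarrow> x * y \<in> quad_units M"
  unfolding quad_units_def using norm_units_mult[of M x _ y] by fastforce

lemma quad_units_inverse: "M \<ge> 0 \<Longrightarrow> x \<in> quad_units M \<Longrightarrow> inverse x \<in> quad_units M"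
  unfolding quad_units_def using inverse_in_norm_units[of M] by auto

lemma quad_units_power: "M \<ge> 0 \<Longrightarrow> x \<in> quad_units M \<Longrightarrow> x ^ k \<in> quad_units M"
  unfolding quad_units_def
  using norm_units_power[of M x 1 k] norm_units_power[of M x "-1" k]
  by (auto simp: minus_one_power_iff split: if_splits)

lemma power_mem_plus_minus_one: "e \<in> {1, -1 :: int} \<Longrightarrow> e ^ n \<in> {1, -1}"
  by (auto simp: minus_one_power_iff split: if_split_asm)

lemma norm_units_unique_norm:
  assumes "M \<ge> 0" "x > 1" "e \<in> {1, -1}" "e' \<in> {1, -1}"
    and "x \<in> norm_units M e" "x \<in> norm_units M e'"
  shows "e = e'"
proof (rule ccontr)
  assume "e \<noteq> e'"
  with assms(3-6) have plus: "x \<in> norm_units M 1" and minus: "x \<in> norm_units M (-1)" by auto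
  obtain a c :: int where "x + 1 / x = a" "x - 1 / x = c"
    using norm_units_trace[OF assms(1) _ plus] norm_units_trace[OF assms(1) _ minus]
    by auto
  then have "2 / x = a - c" by (simp add: field_simps)
  moreover have "0 < 2 / x" "2 / x < 2" using assms(2) by (auto simp: field_simps)
  ultimately have "real_of_int (a - c) > 0" "real_of_int (a - c) < 2" by simp_all
  then have "a - c = 1" by linarith
  with \<open>2 / x = a - c\<close> have "x = 2" by (simp add: field_simps)
  with \<open>x + 1 / x = a\<close> have "5 / 2 = (of_int a :: real)" by simp
  then have "5 = 2 * a" by linarith
  then show False by presburger
qed

text \<open>Since 6/5 < (1 + \<surd>2)/2, this bounds all units > 1 away from 1 uniformly in M.\<close>

lemma half_sum_sqrt_ge:
  fixes a b M :: int
  assumes "M \<ge> 2" "a \<ge> 1" "b \<ge> 1"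
  shows "6/5 \<le> (a + b * sqrt M) / 2"
proof -
  have "7/5 \<le> sqrt 2"
    by (rule real_le_rsqrt) (simp add: power2_eq_square)
  also have "\<dots> \<le> sqrt M" using assms(1) by simp
  finally have "1 * (7/5) \<le> b * sqrt M"
    using assms(3) by (intro mult_mono) auto
  then show ?thesis using assms(2) by simp
qed

lemma quad_units_gt1_coords:
  fixes x :: real
  assumes "M \<ge> 2" "x \<in> quad_units M" "x > 1"
  obtains a b :: int where "x = (a + b * sqrt M) / 2" "1 \<le> a" "1 \<le> b" "a \<le> x + 1" "b \<le> x + 1"
proof -
  obtain e :: int where e: "e \<in> {1, -1}" "x \<in> norm_units M e"
    using assms(2) by (auto simp: quad_units_def)
  then obtain a b :: int where x: "x = (a + b * sqrt M) / 2" "a^2 - M * b^2 = 4 * e"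
    by (auto simp: norm_units_def)
  have "e / x = (a - b * sqrt M) / 2"
    unfolding x(1) using norm_units_conj[OF _ x(2)] assms(1) e(1) by auto
  then have tr: "a = x + e / x" "b * sqrt M = x - e / x" using x(1) by argo+
  have "\<bar>e / x\<bar> < 1" using e assms(3) by auto
  then have "0 < b * sqrt M" "b * sqrt M < x + 1" "1 \<le> a" "a \<le> x + 1"
    using tr assms(3) by linarith+
  then have "1 \<le> b"
    using assms(1) by (simp add: zero_less_mult_iff)
  have "b \<le> b * sqrt M"
    using \<open>1 \<le> b\<close> assms(1) mult_left_mono[of 1 "sqrt M" b] by simp
  then have "b \<le> x + 1" using \<open>b * sqrt M < x + 1\<close> by linarith
  with \<open>1 \<le> b\<close> show thesis using that[OF x(1)] \<open>1 \<le> a\<close> \<open>a \<le> x + 1\<close> by blast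
qed

lemma quad_units_gt1_ge:
  fixes x :: real
  assumes "M \<ge> 2" "x \<in> quad_units M" "x > 1"
  shows "6/5 \<le> x"
  using quad_units_gt1_coords[OF assms] half_sum_sqrt_ge[OF assms(1)] by metis

lemma finite_quad_units_between:
  assumes "M \<ge> 2"
  shows "finite {y \<in> quad_units M. 1 < y \<and> y \<le> c}"
proof (rule finite_subset)
  let ?N = "{1..\<lfloor>c\<rfloor> + 1}"
  show "{y \<in> quad_units M. 1 < y \<and> y \<le> c} \<subseteq> (\<lambda>(a, b). (a + b * sqrt M) / 2) ` (?N \<times> ?N)"
  proof
    fix y assume y: "y \<in> {y \<in> quad_units M. 1 < y \<and> y \<le> c}"
    then obtain a b :: int where "y = (a + b * sqrt M) / 2" "1 \<le> a" "1 \<le> b" "a \<le> y + 1" "b \<le> y + 1"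
      using quad_units_gt1_coords[OF assms] by blast
    moreover from this have "a - 1 \<le> \<lfloor>c\<rfloor>" "b - 1 \<le> \<lfloor>c\<rfloor>"
      using y by (simp_all add: le_floor_iff)
    ultimately show "y \<in> (\<lambda>(a, b). (a + b * sqrt M) / 2) ` (?N \<times> ?N)" by force
  qed
qed simp

lemma ex_power_le_less_Suc_power:
  fixes \<epsilon> y :: real
  assumes "1 < \<epsilon>" "1 \<le> y"
  obtains k where "\<epsilon> ^ k \<le> y" "y < \<epsilon> ^ Suc k"
proof -
  obtain n where "y < \<epsilon> ^ n" using real_arch_pow[OF assms(1)] by blast
  define m where "m = (LEAST n. y < \<epsilon> ^ n)"
  have "y < \<epsilon> ^ m" unfolding m_def by (rule LeastI) fact
  moreover have "m \<noteq> 0" using calculation assms(2) by (intro notI) simp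
  moreover have "\<not> y < \<epsilon> ^ (m - 1)"
    using not_less_Least[of "m - 1" "\<lambda>n. y < \<epsilon> ^ n"] \<open>m \<noteq> 0\<close> unfolding m_def by simp
  ultimately show thesis using that[of "m - 1"] by (simp add: not_less)
qed

lemma fundamental_unit:
  assumes "M \<ge> 2" "x \<in> quad_units M" "x > 1"
  obtains \<epsilon> where "\<epsilon> \<in> quad_units M" "\<epsilon> > 1"
    "\<And>y. y \<in> quad_units M \<Longrightarrow> y > 1 \<Longrightarrow> \<exists>k \<ge> 1. y = \<epsilon> ^ k"
proof -
  define S where "S = {y \<in> quad_units M. 1 < y \<and> y \<le> x}"
  define \<epsilon> where "\<epsilon> = Min S"
  have "finite S" "x \<in> S" using finite_quad_units_between[OF assms(1)] assms unfolding S_def by auto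
  then have "\<epsilon> \<in> S" unfolding \<epsilon>_def by (intro Min_in) auto
  then have "\<epsilon> \<in> quad_units M" "\<epsilon> > 1" by (auto simp: S_def)
  have min: "\<epsilon> \<le> y" if "y \<in> quad_units M" "1 < y" for y
  proof (cases "y \<le> x")
    case True
    then show ?thesis using Min_le[OF \<open>finite S\<close>] that unfolding \<epsilon>_def S_def by auto
  next
    case False
    then show ?thesis using \<open>\<epsilon> \<in> S\<close> by (auto simp: S_def)
  qed
  have "\<exists>k \<ge> 1. y = \<epsilon> ^ k" if y: "y \<in> quad_units M" "y > 1" for y
  proof -
    obtain k where k: "\<epsilon> ^ k \<le> y" "y < \<epsilon> ^ Suc k"
      using ex_power_le_less_Suc_power[OF \<open>\<epsilon> > 1\<close>, of y] y(2) by auto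
    define z where "z = y * inverse (\<epsilon> ^ k)"
    have "z \<in> quad_units M" unfolding z_def using assms(1) y(1) \<open>\<epsilon> \<in> quad_units M\<close>
      by (intro quad_units_mult quad_units_inverse quad_units_power) auto
    moreover have "1 \<le> z" "z < \<epsilon>" using k \<open>\<epsilon> > 1\<close> unfolding z_def by (simp_all add: field_simps)
    ultimately have "z = 1" using min[of z] by fastforce
    then have "y = \<epsilon> ^ k" using \<open>\<epsilon> > 1\<close> unfolding z_def by (simp add: field_simps)
    moreover have "k \<noteq> 0" using \<open>y = \<epsilon> ^ k\<close> y(2) by (intro notI) simp
    ultimately show ?thesis by (intro exI[of _ k]) auto
  qed
  then show thesis using that \<open>\<epsilon> \<in> quad_units M\<close> \<open>\<epsilon> > 1\<close> by blast
qed

lemma norm_units_pair_common_base: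
  assumes "M \<ge> 2" "s \<in> {1, -1}" "x \<in> norm_units M s" "x0 \<in> norm_units M s" "1 < x0" "x0 < x"
  obtains \<epsilon> e j k where "\<epsilon> \<in> norm_units M e" "e \<in> {1, -1}" "1 < \<epsilon>"
    "x0 = \<epsilon> ^ j" "x = \<epsilon> ^ k" "1 \<le> j" "j < k" "e ^ j = s" "e ^ k = s"
proof -
  have M0: "M \<ge> 0" using assms(1) by simp
  have U: "x \<in> quad_units M" "x0 \<in> quad_units M"
    using assms(2-4) unfolding quad_units_def by auto
  obtain \<epsilon> where \<epsilon>: "\<epsilon> \<in> quad_units M" "\<epsilon> > 1"
    and powers: "\<And>y. y \<in> quad_units M \<Longrightarrow> y > 1 \<Longrightarrow> \<exists>k \<ge> 1. y = \<epsilon> ^ k"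
    using fundamental_unit[OF assms(1) U(2) assms(5)] by blast
  obtain e where e: "e \<in> {1, -1}" "\<epsilon> \<in> norm_units M e"
    using \<epsilon>(1) unfolding quad_units_def by auto
  obtain j k where jk: "1 \<le> j" "x0 = \<epsilon> ^ j" "x = \<epsilon> ^ k"
    using powers U assms(5,6) by (metis order.strict_trans)
  have "j < k" using power_less_imp_less_exp[OF \<epsilon>(2)] assms(6) jk by simp
  have "e ^ n = s" if "\<epsilon> ^ n \<in> norm_units M s" "\<epsilon> ^ n > 1" for n
    using norm_units_unique_norm[OF M0 that(2) power_mem_plus_minus_one[OF e(1)] assms(2)
        norm_units_power[OF M0 e(2)] that(1)] .
  then have "e ^ j = s" "e ^ k = s"
    using jk assms(3-6) by auto
  with that e \<epsilon>(2) jk \<open>j < k\<close> show thesis by blast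
qed

section \<open>Dickson polynomials and traces of units\<close>

fun dickson :: "int \<Rightarrow> int \<Rightarrow> nat \<Rightarrow> int" where
  "dickson e u 0 = 2"
| "dickson e u (Suc 0) = u"
| "dickson e u (Suc (Suc n)) = u * dickson e u (Suc n) - e * dickson e u n"

lemma dickson_eq_power_sum:
  fixes x :: real
  assumes "x \<noteq> 0" "x + e / x = u"
  shows "x ^ n + (e / x) ^ n = dickson e u n"
  using assms(2)
proof (induction e u n rule: dickson.induct)
  case (3 e u n)
  define w where "w = e / x"
  have "x * w = e" using assms(1) by (simp add: w_def)
  have "x ^ Suc (Suc n) + w ^ Suc (Suc n) =
        (x + w) * (x ^ Suc n + w ^ Suc n) - (x * w) * (x ^ n + w ^ n)"
    by (simp add: algebra_simps)
  with 3 \<open>x * w = e\<close> show ?case by (simp add: w_def[symmetric])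
qed simp_all

lemma dickson_2 [simp]: "dickson e u 2 = u^2 - 2 * e"
  by (simp add: numeral_eq_Suc power2_eq_square)

lemma dickson_3 [simp]: "dickson e u 3 = u^3 - 3 * e * u"
  by (simp add: numeral_eq_Suc power3_eq_cube algebra_simps)

lemma norm_units_trace_dickson:
  fixes \<epsilon> :: real
  assumes "M \<ge> 0" "e \<in> {1, -1}" "\<epsilon> \<in> norm_units M e" "1 < \<epsilon>"
  obtains u :: int where "1 \<le> u" "u - 1 \<le> \<epsilon>" "\<And>k. \<epsilon> ^ k + (e / \<epsilon>) ^ k = dickson e u k"
proof -
  obtain u :: int where u: "\<epsilon> + e / \<epsilon> = u"
    using norm_units_trace[OF assms(1) _ assms(3)] assms(2) by auto
  have "\<bar>e / \<epsilon>\<bar> < 1" using assms(2,4) by auto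
  then have "0 < real_of_int u" "u - 1 \<le> \<epsilon>" using u assms(4) by linarith+
  show thesis
  proof (rule that)
    show "1 \<le> u" using \<open>0 < real_of_int u\<close> by simp
    show "u - 1 \<le> \<epsilon>" by fact
    show "\<epsilon> ^ k + (e / \<epsilon>) ^ k = dickson e u k" for k
      using dickson_eq_power_sum[OF _ u] assms(4) by simp
  qed
qed

lemma trace_mono:
  fixes x y e :: real
  assumes "1 \<le> x" "x \<le> y" "e \<le> 1"
  shows "x + e / x \<le> y + e / y"
proof -
  have "1 \<le> x * y" using assms mult_mono[of 1 x 1 y] by simp
  then have "e / (x * y) \<le> 1" using assms(3) by (simp add: divide_le_eq)
  then have "0 \<le> (y - x) * (1 - e / (x * y))" using assms(2) by simp
  also have "\<dots> = (y + e / y) - (x + e / x)" using assms(1,2) by (simp add: field_simps)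
  finally show ?thesis by simp
qed

lemma pell_solution_unit:
  fixes M s t r :: int
  assumes "M \<ge> 2" "s \<in> {1, -1}" "1 \<le> t" "1 \<le> r" "t^2 - M * r^2 = 4 * s"
  defines "x \<equiv> (t + r * sqrt M) / 2"
  shows "x \<in> norm_units M s" "1 < x" "x + s / x = t"
proof -
  show "x \<in> norm_units M s" unfolding x_def norm_units_def using assms(5) by blast
  show "1 < x" using half_sum_sqrt_ge[OF assms(1,3,4)] unfolding x_def by simp
  have "s / x = (t - r * sqrt M) / 2"
    unfolding x_def using norm_units_conj[OF _ assms(5)] assms(1,2) by auto
  then show "x + s / x = t" unfolding x_def by argo
qed

lemma pell_pair_dickson:
  fixes M s t0 t r0 r :: int
  assumes "M \<ge> 2" "s \<in> {1, -1}" "1 \<le> t0" "t0 < t" "1 \<le> r0" "1 \<le> r"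
    and "t0^2 - M * r0^2 = 4 * s" "t^2 - M * r^2 = 4 * s"
  obtains e u j k where "e \<in> {1, -1}" "e ^ j = s" "e ^ k = s" "1 \<le> j" "j < k" "1 \<le> u"
    "t = dickson e u k" "real_of_int ((u - 1) ^ k) \<le> t + 1" "(6/5) ^ k \<le> t + 1"
proof -
  define x where "x = (t + r * sqrt M) / 2"
  define x0 where "x0 = (t0 + r0 * sqrt M) / 2"
  have M0: "M \<ge> 0" and "1 \<le> t" using assms(1,3,4) by simp_all
  note x = pell_solution_unit[OF assms(1,2) \<open>1 \<le> t\<close> assms(6,8), folded x_def]
  note x0 = pell_solution_unit[OF assms(1,2,3,5,7), folded x0_def]
  have "x0 < x"
  proof (rule ccontr)
    assume "\<not> x0 < x"
    then have "x + s / x \<le> x0 + s / x0"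
      using trace_mono[of x x0 s] x(2) assms(2-4) by auto
    with x(3) x0(3) assms(4) show False by simp
  qed
  then obtain \<epsilon> e j k where \<epsilon>: "\<epsilon> \<in> norm_units M e" "e \<in> {1, -1}" "1 < \<epsilon>"
    and jk: "x = \<epsilon> ^ k" "1 \<le> j" "j < k" "e ^ j = s" "e ^ k = s"
    using norm_units_pair_common_base[OF assms(1,2) x(1) x0(1) x0(2)] by metis
  obtain u :: int where u: "1 \<le> u" "u - 1 \<le> \<epsilon>" "\<And>k. \<epsilon> ^ k + (e / \<epsilon>) ^ k = dickson e u k"
    using norm_units_trace_dickson[OF M0 \<epsilon>(2,1,3)] by blast
  have "s / x = (e / \<epsilon>) ^ k" using jk(1,5) by (simp add: power_divide)
  then have t: "t = \<epsilon> ^ k + (e / \<epsilon>) ^ k" using x(3) jk(1) by simp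
  then have "t = dickson e u k" using u(3) by (metis of_int_eq_iff)
  have "\<bar>(e / \<epsilon>) ^ k\<bar> \<le> 1" using \<epsilon>(2,3) by (auto simp: power_abs intro: power_le_one)
  then have "\<epsilon> ^ k \<le> t + 1" using t by linarith
  moreover have "real_of_int (u - 1) ^ k \<le> \<epsilon> ^ k" using u(1,2) by (intro power_mono) auto
  moreover have "(6/5) ^ k \<le> \<epsilon> ^ k"
    using quad_units_gt1_ge[OF assms(1) _ \<epsilon>(3)] \<epsilon>(1,2) unfolding quad_units_def
    by (intro power_mono) auto
  ultimately have "real_of_int ((u - 1) ^ k) \<le> t + 1" "(6/5) ^ k \<le> t + 1"
    by simp_all
  then show thesis using that \<epsilon>(2) jk(2-5) u(1) \<open>t = dickson e u k\<close> by blast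
qed

section \<open>Counting repeated values\<close>

lemma square_diff_ne_four:
  fixes t r s :: int
  assumes "1 \<le> t" "1 \<le> r" "s \<in> {1, -1}"
  shows "t^2 - r^2 \<noteq> 4 * s"
proof
  assume eq: "t^2 - r^2 = 4 * s"
  have prod: "(t - r) * (t + r) = 4 * s" using eq by (simp add: power2_eq_square algebra_simps)
  have "t \<noteq> r" using eq assms(3) by auto
  have "even ((t - r) * (t + r))" using prod by simp
  moreover have "even (t - r) \<longleftrightarrow> even (t + r)" by simp
  ultimately have "even (t - r)" "even (t + r)" by auto
  then have "2 \<le> \<bar>t - r\<bar>" "4 \<le> t + r" using \<open>t \<noteq> r\<close> assms(1,2) by presburger+
  then have "2 * 4 \<le> \<bar>t - r\<bar> * (t + r)" by (intro mult_mono) auto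
  also have "\<dots> = \<bar>4 * s\<bar>" using prod assms(1,2) by (simp flip: prod add: abs_mult)
  finally show False using assms(3) by auto
qed

lemma repeated_dickson:
  assumes "s \<in> {1, -1}" "t \<in> repeated s B"
  obtains e u j k where "e \<in> {1, -1}" "e ^ j = s" "e ^ k = s" "1 \<le> j" "j < k" "1 \<le> u"
    "t = dickson e u k" "real_of_int ((u - 1) ^ k) \<le> real_of_int B + 1" "(6/5) ^ k \<le> real_of_int B + 1"
proof -
  obtain t0 where t0: "t0 \<in> I_set s B" "t \<in> I_set s B" "t0 < t"
    "sqfree_part (t0^2 - 4 * s) = sqfree_part (t^2 - 4 * s)"
    using assms(2) unfolding repeated_def by blast
  then have pos: "t0^2 - 4 * s > 0" "t^2 - 4 * s > 0" "1 \<le> t0" "t \<le> B"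
    by (auto simp: I_set_def)
  define M where "M = sqfree_part (t^2 - 4 * s)"
  obtain r where r: "1 \<le> r" "t^2 - 4 * s = M * r^2"
    using sqfree_part(2)[OF pos(2)] unfolding M_def by blast
  obtain r0 where r0: "1 \<le> r0" "t0^2 - 4 * s = M * r0^2"
    using sqfree_part(2)[OF pos(1)] t0(4) unfolding M_def by auto
  have "M > 0" using pos(2) r by (simp add: zero_less_mult_iff)
  moreover have "M \<noteq> 1"
  proof
    assume "M = 1"
    with r(2) have "t^2 - r^2 = 4 * s" by simp
    with square_diff_ne_four[OF _ r(1) assms(1)] pos(3) t0(3) show False by simp
  qed
  ultimately have "M \<ge> 2" by simp
  have eqs: "t0^2 - M * r0^2 = 4 * s" "t^2 - M * r^2 = 4 * s" using r r0 by simp_all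
  obtain e u j k where euk: "e \<in> {1, -1}" "e ^ j = s" "e ^ k = s" "1 \<le> j" "j < k" "1 \<le> u"
    "t = dickson e u k" "real_of_int ((u - 1) ^ k) \<le> t + 1" "(6/5) ^ k \<le> t + 1"
    by (rule pell_pair_dickson[OF \<open>M \<ge> 2\<close> assms(1) pos(3) t0(3) r0(1) r(1) eqs])
  have "real_of_int t + 1 \<le> B + 1" using pos(4) by simp
  then show thesis using euk(8,9) by (intro that[OF euk(1-7)]) linarith+
qed

definition dickson_tail :: "nat \<Rightarrow> real \<Rightarrow> int set" where
  "dickson_tail c X = {dickson e u k | e u k. e \<in> {1, -1} \<and> 1 \<le> u \<and> c \<le> k \<and>
                         real_of_int ((u - 1) ^ k) \<le> X \<and> (6/5) ^ k \<le> X}"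

lemma le_root_if_power_le:
  fixes v X :: real and c k :: nat
  assumes "0 \<le> v" "1 \<le> X" "1 \<le> c" "c \<le> k" "v ^ k \<le> X"
  shows "v \<le> X powr (1 / c)"
proof (cases "v \<le> 1")
  case True
  then show ?thesis using assms(2) ge_one_powr_ge_zero[of X "1 / c"] by simp
next
  case False
  then have "v ^ c \<le> v ^ k" using assms(4) by (intro power_increasing) auto
  then have "v ^ c \<le> X" using assms(5) by linarith
  then have "(v ^ c) powr (1 / c) \<le> X powr (1 / c)"
    using False by (intro powr_mono2) auto
  moreover have "(v ^ c) powr (1 / c) = v"
    using False assms(3) by (simp add: powr_realpow[symmetric] powr_powr)
  ultimately show ?thesis by simp
qed

lemma le_log_if_power_le:
  fixes b X :: real
  assumes "1 < b" "b ^ k \<le> X"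
  shows "k \<le> log b X"
proof -
  have "0 < b ^ k" using assms(1) by simp
  moreover have "0 < X" using calculation assms(2) by linarith
  ultimately have "log b (b ^ k) \<le> log b X" using assms by (subst log_le_cancel_iff) auto
  then show ?thesis using assms(1) by simp
qed

lemma dickson_tail_subset:
  assumes "1 \<le> c" "1 \<le> X"
  shows "dickson_tail c X \<subseteq> (\<lambda>(e, u, k). dickson e u k) `
           ({1, -1} \<times> {1..\<lfloor>X powr (1 / c)\<rfloor> + 1} \<times> {c..nat \<lfloor>log (6/5) X\<rfloor>})"
proof
  fix t assume "t \<in> dickson_tail c X"
  then obtain e u k where euk: "e \<in> {1, -1}" "1 \<le> u" "c \<le> k" "t = dickson e u k"
    "real_of_int (u - 1) ^ k \<le> X" "(6/5) ^ k \<le> X"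
    unfolding dickson_tail_def by auto
  have "u - 1 \<le> X powr (1 / c)"
    using le_root_if_power_le[OF _ assms(2,1) euk(3,5)] euk(2) by simp
  then have "u - 1 \<le> \<lfloor>X powr (1 / c)\<rfloor>" by (simp add: le_floor_iff)
  moreover have "k \<le> nat \<lfloor>log (6/5) X\<rfloor>"
    using le_log_if_power_le[OF _ euk(6)] by (simp add: le_nat_floor)
  ultimately show "t \<in> (\<lambda>(e, u, k). dickson e u k) `
      ({1, -1} \<times> {1..\<lfloor>X powr (1 / c)\<rfloor> + 1} \<times> {c..nat \<lfloor>log (6/5) X\<rfloor>})"
    using euk(1-4) by force
qed

lemma finite_dickson_tail: "1 \<le> c \<Longrightarrow> 1 \<le> X \<Longrightarrow> finite (dickson_tail c X)"
  by (rule finite_subset[OF dickson_tail_subset]) auto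

lemma card_dickson_tail_le:
  assumes "1 \<le> c" "1 \<le> X"
  shows "real (card (dickson_tail c X)) \<le> 2 * (X powr (1 / c) + 1) * log (6/5) X"
proof -
  define U where "U = {1..\<lfloor>X powr (1 / c)\<rfloor> + 1}"
  define K where "K = {c..nat \<lfloor>log (6/5) X\<rfloor>}"
  have fin: "finite ({1, -1 :: int} \<times> U \<times> K)" by (simp add: U_def K_def)
  note sub = dickson_tail_subset[OF assms, folded U_def K_def]
  have "card (dickson_tail c X) \<le> card ((\<lambda>(e, u, k). dickson e u k) ` ({1, -1} \<times> U \<times> K))"
    by (rule card_mono[OF finite_imageI[OF fin] sub])
  also have "\<dots> \<le> card ({1, -1 :: int} \<times> U \<times> K)"
    by (rule card_image_le[OF fin])
  also have "\<dots> = 2 * card U * card K" by (simp add: card_cartesian_product)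
  finally have "real (card (dickson_tail c X)) \<le> real (2 * card U * card K)"
    by (simp only: of_nat_le_iff)
  also have "\<dots> = 2 * real (card U) * real (card K)" by simp
  also have "\<dots> \<le> 2 * (X powr (1 / c) + 1) * log (6/5) X"
  proof (intro mult_mono)
    show "real (card U) \<le> X powr (1 / c) + 1"
      unfolding U_def by (simp add: of_nat_nat)
    have "real (card K) \<le> real (nat \<lfloor>log (6/5) X\<rfloor>)"
      unfolding K_def using assms(1) by simp
    also have "\<dots> \<le> log (6/5) X" using assms(2) by (simp add: of_nat_nat)
    finally show "real (card K) \<le> log (6/5) X" .
  qed (use assms(2) in auto)
  finally show ?thesis .
qed

lemma repeated_plus_subset:
  "repeated 1 B \<subseteq> (\<lambda>u. u^2 - 2) ` {1..\<lfloor>sqrt (real_of_int B + 2)\<rfloor>} \<union> dickson_tail 3 (real_of_int B + 1)"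
proof
  fix t assume t: "t \<in> repeated 1 B"
  obtain e u j k where euk: "e \<in> {1, -1}" "e ^ j = 1" "e ^ k = 1" "1 \<le> j" "j < k" "1 \<le> u"
    "t = dickson e u k" "real_of_int ((u - 1) ^ k) \<le> real_of_int B + 1" "(6/5) ^ k \<le> real_of_int B + 1"
    by (rule repeated_dickson[OF _ t]) simp
  show "t \<in> (\<lambda>u. u^2 - 2) ` {1..\<lfloor>sqrt (real_of_int B + 2)\<rfloor>} \<union> dickson_tail 3 (real_of_int B + 1)"
  proof (cases "k = 2")
    case True
    then have "j = 1" using euk(4,5) by simp
    then have "e = 1" using euk(2) by simp
    then have tu: "t = u^2 - 2" using euk(7) True by simp
    moreover have "t \<le> B" using t by (simp add: repeated_def I_set_def)
    ultimately have "real_of_int u ^ 2 \<le> B + 2" by (simp flip: of_int_power)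
    then have "u \<le> \<lfloor>sqrt (real_of_int B + 2)\<rfloor>" by (simp add: le_floor_iff real_le_rsqrt)
    with tu euk(6) show ?thesis by auto
  next
    case False
    then have "3 \<le> k" using euk(4,5) by simp
    then show ?thesis using euk unfolding dickson_tail_def by blast
  qed
qed

lemma repeated_minus_subset:
  "repeated (-1) B \<subseteq> (\<lambda>u. u^3 + 3 * u) ` {1..\<lfloor>B powr (1/3)\<rfloor>} \<union> dickson_tail 5 (real_of_int B + 1)"
proof
  fix t assume t: "t \<in> repeated (-1) B"
  obtain e u j k where euk: "e \<in> {1, -1}" "e ^ j = -1" "e ^ k = -1" "1 \<le> j" "j < k" "1 \<le> u"
    "t = dickson e u k" "real_of_int ((u - 1) ^ k) \<le> real_of_int B + 1" "(6/5) ^ k \<le> real_of_int B + 1"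
    by (rule repeated_dickson[OF _ t]) simp
  have "e = -1" using euk(1,2) by auto
  then have "odd j" "odd k" using euk(2,3) by (simp_all add: minus_one_power_iff split: if_split_asm)
  show "t \<in> (\<lambda>u. u^3 + 3 * u) ` {1..\<lfloor>B powr (1/3)\<rfloor>} \<union> dickson_tail 5 (real_of_int B + 1)"
  proof (cases "k = 3")
    case True
    then have tu: "t = u^3 + 3 * u" using euk(7) \<open>e = -1\<close> by simp
    moreover have "1 \<le> t" "t \<le> B" using t by (simp_all add: repeated_def I_set_def)
    ultimately have "real_of_int u ^ 3 \<le> B" "1 \<le> real_of_int B"
      using euk(6) by (simp_all flip: of_int_power)
    then have "u \<le> B powr (1/3)"
      using le_root_if_power_le[of "real_of_int u" B 3 3] euk(6) by simp
    then have "u \<le> \<lfloor>B powr (1/3)\<rfloor>" by (simp add: le_floor_iff)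
    with tu euk(6) show ?thesis by auto
  next
    case False
    then have "5 \<le> k" using euk(4,5) \<open>odd j\<close> \<open>odd k\<close> by presburger
    then show ?thesis using euk unfolding dickson_tail_def by blast
  qed
qed

lemma square_family_subset_repeated:
  "(\<lambda>u. u^2 - 2) ` {3..\<lfloor>sqrt B\<rfloor>} \<subseteq> repeated 1 B"
proof
  fix t assume "t \<in> (\<lambda>u. u^2 - 2) ` {3..\<lfloor>sqrt B\<rfloor>}"
  then obtain u where u: "t = u^2 - 2" "3 \<le> u" "u \<le> \<lfloor>sqrt B\<rfloor>" by auto
  have "3 \<le> sqrt B" "real_of_int u \<le> sqrt B" using u(2,3) by (simp_all add: le_floor_iff)
  then have "real_of_int u ^ 2 \<le> sqrt B ^ 2" using u(2) by (intro power_mono) auto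
  also have "0 \<le> real_of_int B"
  proof (rule ccontr)
    assume "\<not> 0 \<le> real_of_int B"
    then have "sqrt B \<le> 0" by simp
    with \<open>3 \<le> sqrt B\<close> show False by simp
  qed
  then have "sqrt B ^ 2 = B" by simp
  finally have "u^2 \<le> B" by (simp flip: of_int_power)
  have "3 * u \<le> u^2" using u(2) by (simp add: power2_eq_square)
  then have "u < t" "7 \<le> t" using u(1,2) by linarith+
  then have "4 < t^2" using power_mono[of 7 t 2] by simp
  have "u^2 - 4 > 0" using power_mono[of 3 u 2] u(2) by simp
  have "u \<in> I_set 1 B" "t \<in> I_set 1 B"
    using u(1,2) \<open>u^2 \<le> B\<close> \<open>u < t\<close> \<open>4 < t^2\<close> \<open>u^2 - 4 > 0\<close> by (auto simp: I_set_def)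
  moreover have "t^2 - 4 * 1 = (u^2 - 4 * 1) * u^2"
    unfolding u(1) by (simp add: power2_eq_square algebra_simps)
  ultimately show "t \<in> repeated 1 B" using \<open>u < t\<close> u(2) by (intro repeatedI) auto
qed

lemma cube_family_subset_repeated:
  assumes "1 \<le> B"
  shows "(\<lambda>u. u^3 + 3 * u) ` {1..\<lfloor>B powr (1/3)\<rfloor> - 1} \<subseteq> repeated (-1) B"
proof
  fix t assume "t \<in> (\<lambda>u. u^3 + 3 * u) ` {1..\<lfloor>B powr (1/3)\<rfloor> - 1}"
  then obtain u where u: "t = u^3 + 3 * u" "1 \<le> u" "u + 1 \<le> \<lfloor>B powr (1/3)\<rfloor>" by auto
  have "real_of_int (u + 1) \<le> B powr (1/3)" using u(3) by (simp add: le_floor_iff)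
  then have "real_of_int (u + 1) ^ 3 \<le> (B powr (1/3)) ^ 3" using u(2) by (intro power_mono) auto
  also have "\<dots> = (B powr (1/3)) powr 3" by simp
  also have "\<dots> = B" using assms by (simp add: powr_powr)
  finally have "real_of_int ((u + 1)^3) \<le> real_of_int B" by simp
  then have "(u + 1)^3 \<le> B" by (simp only: of_int_le_iff)
  moreover have "t \<le> (u + 1)^3" using u(1,2) by (simp add: power3_eq_cube algebra_simps)
  moreover have "0 \<le> u^3" using u(2) by simp
  ultimately have "u < t" "t \<le> B" using u(1,2) by linarith+
  then have "u \<in> I_set (-1) B" "t \<in> I_set (-1) B" "u < t"
    using u(2) by (auto simp: I_set_def add_nonneg_pos)
  moreover have "t^2 - 4 * (-1) = (u^2 - 4 * (-1)) * (u^2 + 1)^2"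
    unfolding u(1) by (simp add: power2_eq_square power3_eq_cube algebra_simps)
  moreover have "u^2 + 1 \<noteq> 0" by (metis add_nonneg_pos zero_le_power2 zero_less_one less_irrefl)
  ultimately show "t \<in> repeated (-1) B" by (rule repeatedI)
qed

lemma card_image_floor_interval_le:
  fixes f :: "int \<Rightarrow> 'a"
  assumes "0 \<le> x"
  shows "real (card (f ` {1..\<lfloor>x\<rfloor>})) \<le> x"
proof -
  have "card (f ` {1..\<lfloor>x\<rfloor>}) \<le> nat \<lfloor>x\<rfloor>"
    using card_image_le[of "{1..\<lfloor>x\<rfloor>}" f] by simp
  then have "real (card (f ` {1..\<lfloor>x\<rfloor>})) \<le> real (nat \<lfloor>x\<rfloor>)"
    by (simp only: of_nat_le_iff)
  also have "\<dots> \<le> x" using assms by (rule of_nat_floor)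
  finally show ?thesis .
qed

lemma Delta_plus_bounds:
  assumes "1 \<le> B"
  shows "sqrt B - 3 \<le> Delta 1 B"
    and "Delta 1 B \<le> sqrt (real_of_int B + 2) + 2 * ((real_of_int B + 1) powr (1/3) + 1) * log (6/5) (real_of_int B + 1)"
proof -
  have inj: "inj_on (\<lambda>u::int. u^2 - 2) {3..\<lfloor>sqrt B\<rfloor>}"
    by (rule inj_onI) (simp add: power2_eq_iff_nonneg)
  have "card ((\<lambda>u. u^2 - 2) ` {3..\<lfloor>sqrt B\<rfloor>}) \<le> card (repeated 1 B)"
    by (rule card_mono[OF _ square_family_subset_repeated]) (simp add: repeated_def finite_I_set)
  then have "nat (\<lfloor>sqrt B\<rfloor> - 2) \<le> card (repeated 1 B)" by (simp add: card_image[OF inj])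
  then show "sqrt B - 3 \<le> Delta 1 B"
    unfolding Delta_eq_card_repeated by linarith
  let ?A = "(\<lambda>u. u^2 - 2) ` {1..\<lfloor>sqrt (real_of_int B + 2)\<rfloor>}"
  let ?T = "dickson_tail 3 (real_of_int B + 1)"
  have "card (repeated 1 B) \<le> card (?A \<union> ?T)"
    using assms by (intro card_mono[OF _ repeated_plus_subset]) (simp add: finite_dickson_tail)
  also have "\<dots> \<le> card ?A + card ?T" by (rule card_Un_le)
  finally have "real (card (repeated 1 B)) \<le> real (card ?A) + real (card ?T)" by linarith
  moreover have "real (card ?A) \<le> sqrt (real_of_int B + 2)"
    using assms by (intro card_image_floor_interval_le) simp
  moreover have "real (card ?T) \<le> 2 * ((real_of_int B + 1) powr (1/3) + 1) * log (6/5) (real_of_int B + 1)"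
    using card_dickson_tail_le[of 3 "real_of_int B + 1"] assms by simp
  ultimately show "Delta 1 B \<le> sqrt (real_of_int B + 2) + 2 * ((real_of_int B + 1) powr (1/3) + 1) * log (6/5) (real_of_int B + 1)"
    unfolding Delta_eq_card_repeated by linarith
qed

lemma Delta_minus_bounds:
  assumes "1 \<le> B"
  shows "B powr (1/3) - 2 \<le> Delta (-1) B"
    and "Delta (-1) B \<le> B powr (1/3) + 2 * ((real_of_int B + 1) powr (1/5) + 1) * log (6/5) (real_of_int B + 1)"
proof -
  have "strict_mono_on {1..} (\<lambda>u::int. u^3 + 3 * u)"
    by (rule strict_mono_onI) (simp add: add_strict_mono power_strict_mono)
  then have inj: "inj_on (\<lambda>u::int. u^3 + 3 * u) {1..\<lfloor>B powr (1/3)\<rfloor> - 1}"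
    by (rule strict_mono_on_imp_inj_on[THEN inj_on_subset]) auto
  have "card ((\<lambda>u. u^3 + 3 * u) ` {1..\<lfloor>B powr (1/3)\<rfloor> - 1}) \<le> card (repeated (-1) B)"
    using assms
    by (intro card_mono[OF _ cube_family_subset_repeated]) (simp_all add: repeated_def finite_I_set)
  then have "nat (\<lfloor>B powr (1/3)\<rfloor> - 1) \<le> card (repeated (-1) B)" by (simp add: card_image[OF inj])
  then show "B powr (1/3) - 2 \<le> Delta (-1) B"
    unfolding Delta_eq_card_repeated by linarith
  let ?A = "(\<lambda>u. u^3 + 3 * u) ` {1..\<lfloor>B powr (1/3)\<rfloor>}"
  let ?T = "dickson_tail 5 (real_of_int B + 1)"
  have "card (repeated (-1) B) \<le> card (?A \<union> ?T)"
    using assms by (intro card_mono[OF _ repeated_minus_subset]) (simp add: finite_dickson_tail)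
  also have "\<dots> \<le> card ?A + card ?T" by (rule card_Un_le)
  finally have "real (card (repeated (-1) B)) \<le> real (card ?A) + real (card ?T)" by linarith
  moreover have "real (card ?A) \<le> B powr (1/3)"
    by (intro card_image_floor_interval_le) simp
  moreover have "real (card ?T) \<le> 2 * ((real_of_int B + 1) powr (1/5) + 1) * log (6/5) (real_of_int B + 1)"
    using card_dickson_tail_le[of 5 "real_of_int B + 1"] assms by simp
  ultimately show "Delta (-1) B \<le> B powr (1/3) + 2 * ((real_of_int B + 1) powr (1/5) + 1) * log (6/5) (real_of_int B + 1)"
    unfolding Delta_eq_card_repeated by linarith
qed

lemma asymp_equiv_of_int_sandwich:
  fixes f :: "int \<Rightarrow> real" and l h g :: "real \<Rightarrow> real"
  assumes "l \<sim>[at_top] g" "h \<sim>[at_top] g"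
    and "\<And>B. 1 \<le> B \<Longrightarrow> l B \<le> f B \<and> f B \<le> h B"
  shows "f \<sim>[at_top] (\<lambda>B. g (real_of_int B))"
proof (rule asymp_equiv_sandwich_real)
  show "(\<lambda>B. l (real_of_int B)) \<sim>[at_top] (\<lambda>B. g (real_of_int B))"
    using assms(1) filterlim_real_of_int_at_top by (rule asymp_equiv_compose')
  show "(\<lambda>B. h (real_of_int B)) \<sim>[at_top] (\<lambda>B. g (real_of_int B))"
    using assms(2) filterlim_real_of_int_at_top by (rule asymp_equiv_compose')
  show "\<forall>\<^sub>F B in at_top. f B \<in> {l (real_of_int B)..h (real_of_int B)}"
    using eventually_ge_at_top[of "1::int"] by eventually_elim (use assms(3) in auto)
qed

theorem theorem4p5:
  shows "((\<lambda>B::int. real_of_int (Delta (-1) B)) \<sim>[at_top] (\<lambda>B. real_of_int B powr (1/3))) \<and>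
         ((\<lambda>B::int. real_of_int (Delta 1 B)) \<sim>[at_top] (\<lambda>B. real_of_int B powr (1/2)))"
proof
  have "(\<lambda>x::real. x powr (1/3) - 2) \<sim>[at_top] (\<lambda>x. x powr (1/3))"
       "(\<lambda>x::real. x powr (1/3) + 2 * ((x + 1) powr (1/5) + 1) * log (6/5) (x + 1))
          \<sim>[at_top] (\<lambda>x. x powr (1/3))"
    by real_asymp+
  then show "(\<lambda>B::int. real_of_int (Delta (-1) B)) \<sim>[at_top] (\<lambda>B. real_of_int B powr (1/3))"
    by (rule asymp_equiv_of_int_sandwich) (use Delta_minus_bounds in auto)
  have "(\<lambda>x::real. sqrt x - 3) \<sim>[at_top] (\<lambda>x. x powr (1/2))"
       "(\<lambda>x::real. sqrt (x + 2) + 2 * ((x + 1) powr (1/3) + 1) * log (6/5) (x + 1))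
          \<sim>[at_top] (\<lambda>x. x powr (1/2))"
    by real_asymp+
  then show "(\<lambda>B::int. real_of_int (Delta 1 B)) \<sim>[at_top] (\<lambda>B. real_of_int B powr (1/2))"
    by (rule asymp_equiv_of_int_sandwich) (use Delta_plus_bounds in auto)
qed

end
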